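(* Let $\tfrac12\le s<1$ and for $\varepsilon>0$ let $B_\varepsilon=\{(x,y)\in\mathbb{R}^n\times\mathbb{R}^n:|x-y|<\varepsilon\}$ and $B_\varepsilon^c$ its complement in $\mathbb{R}^{2n}$. For every $\Phi\in\mathscr{C}_c^\infty(\mathbb{R}^{2n})$ the limit $$\langle\!\langle S,\Phi\rangle\!\rangle=\lim_{\varepsilon\to0}\iint_{B^c_\varepsilon}\frac{\Phi(x,y)-\Phi(x,x)}{|x-y|^{n+2s}}\,dx\,dy$$ exists (each integral converging absolutely), and $S$ is a distribution in $\mathscr{D}'(\mathbb{R}^{2n})$.
   Context: $\mathscr{D}'(\mathbb{R}^{2n})$ is the space of linear functionals on $\mathscr{C}_c^\infty(\mathbb{R}^{2n})$ continuous for its usual topology. *)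

theory Defs
  imports "HOL-Analysis.Analysis"
begin

fun dderiv :: "'a::euclidean_space list \<Rightarrow> ('a \<Rightarrow> real) \<Rightarrow> 'a \<Rightarrow> real" where
  "dderiv [] f = f"
| "dderiv (v # vs) f = (\<lambda>x. frechet_derivative (dderiv vs f) (at x) v)"

definition smooth :: "('a::euclidean_space \<Rightarrow> real) \<Rightarrow> bool" where
  "smooth f \<longleftrightarrow> (\<forall>vs. set vs \<subseteq> Basis \<longrightarrow> (\<forall>x. dderiv vs f differentiable (at x)))"

definition tsupport :: "('a::euclidean_space \<Rightarrow> real) \<Rightarrow> 'a set" where
  "tsupport f = closure {x. f x \<noteq> 0}"

definition test_fun :: "('a::euclidean_space \<Rightarrow> real) \<Rightarrow> bool" where
  "test_fun f \<longleftrightarrow> smooth f \<and> compact (tsupport f)"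

definition Cm_seminorm :: "nat \<Rightarrow> ('a::euclidean_space \<Rightarrow> real) \<Rightarrow> real" where
  "Cm_seminorm m f = (\<Sum>vs\<in>{vs. set vs \<subseteq> Basis \<and> length vs \<le> m}. (SUP x. \<bar>dderiv vs f x\<bar>))"

text \<open>A distribution: a linear functional on C_c^infinity which is continuous for the usual
  (inductive limit) topology, i.e. continuous on each D_K, i.e. bounded on D_K by
  finitely many seminorms.\<close>
definition distribution :: "(('a::euclidean_space \<Rightarrow> real) \<Rightarrow> real) \<Rightarrow> bool" where
  "distribution T \<longleftrightarrow>
     (\<forall>f g. test_fun f \<longrightarrow> test_fun g \<longrightarrow> T (\<lambda>x. f x + g x) = T f + T g) \<and>
     (\<forall>c f. test_fun f \<longrightarrow> T (\<lambda>x. c * f x) = c * T f) \<and>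
     (\<forall>K. compact K \<longrightarrow> (\<exists>C m. \<forall>f. test_fun f \<and> tsupport f \<subseteq> K \<longrightarrow>
          \<bar>T f\<bar> \<le> C * Cm_seminorm m f))"

definition Bc :: "real \<Rightarrow> ((real^'n) \<times> (real^'n)) set" where
  "Bc \<epsilon> = {z. dist (fst z) (snd z) \<ge> \<epsilon>}"

definition kernel_S :: "real \<Rightarrow> ((real^'n) \<times> (real^'n) \<Rightarrow> real) \<Rightarrow> (real^'n) \<times> (real^'n) \<Rightarrow> real" where
  "kernel_S s \<Phi> z = (\<Phi> z - \<Phi> (fst z, fst z)) / norm (fst z - snd z) powr (real CARD('n) + 2 * s)"

definition trunc_S :: "real \<Rightarrow> ((real^'n) \<times> (real^'n) \<Rightarrow> real) \<Rightarrow> real \<Rightarrow> real" where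
  "trunc_S s \<Phi> \<epsilon> = (LINT z:Bc \<epsilon>|lborel. kernel_S s \<Phi> z)"

definition S_op :: "real \<Rightarrow> ((real^'n) \<times> (real^'n) \<Rightarrow> real) \<Rightarrow> real" where
  "S_op s \<Phi> = Lim (at_right 0) (trunc_S s \<Phi>)"

end

theory Submission
  imports Defs
begin

(* Substituting y = x + h and averaging over h and -h (the shears (x, h) |-> (x, x + h) and
   (x, h) |-> (x, x - h) preserve Lebesgue measure on R^n x R^n) turns the truncated integral into
   the integral over |h| >= eps of the symmetric second difference
     (Phi(x, x + h) + Phi(x, x - h) - 2 Phi(x, x)) / (2 |h|^(n+2s)).
   By the mean value theorem this numerator is O(|h|^2) times the C^2 seminorm of Phi, and it is
   trivially O(1) times that seminorm; so the integrand is dominated by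
   |Phi|_C2 1_K(x) min(|h|^2, 1) / |h|^(n+2s), which is integrable because n < n + 2s < n + 2
   (split R^n into dyadic shells). Dominated convergence yields the limit together with the
   bound |S Phi| <= C_K |Phi|_C2 for supp Phi in K, and linearity passes to the limit. *)

section \<open>Integrability of powers of the norm\<close>

lemma ex_power2_interval:
  fixes t :: real
  assumes "1 \<le> t"
  shows "\<exists>k. 2 ^ k \<le> t \<and> t < 2 ^ Suc k"
proof -
  obtain n where "t < 2 ^ n" using real_arch_pow[of 2 t] by auto
  then show ?thesis using exists_least_lemma[of "\<lambda>k. t < 2 ^ k"] assms by (auto simp: not_less)
qed

lemma powr_mult_power:
  fixes r c b :: real
  assumes "0 < r" "0 < c"
  shows "(r * c ^ k) powr b = r powr b * (c powr b) ^ k"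
  using assms by (simp add: powr_mult powr_power powr_realpow[symmetric] powr_powr mult.commute)

lemma set_integrable_shells:
  fixes S :: "'a::euclidean_space set" and A :: "nat \<Rightarrow> 'a set"
  assumes S: "S \<in> sets lborel" and f: "f \<in> borel_measurable lborel"
    and f0: "\<And>h. h \<in> S \<Longrightarrow> 0 \<le> f h"
    and A: "\<And>k. A k \<in> sets lborel"
    and cover: "\<And>h. h \<in> S \<Longrightarrow> \<exists>k. h \<in> A k"
    and bound: "\<And>k h. h \<in> A k \<Longrightarrow> f h \<le> B k"
    and radius: "\<And>k. A k \<subseteq> ball 0 (R k)"
    and B: "\<And>k. 0 \<le> B k" and R: "\<And>k. 0 \<le> R k"
    and summable: "summable (\<lambda>k. B k * R k ^ DIM('a))"
  shows "set_integrable lborel S f"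
  unfolding set_integrable_def
proof (rule integrableI_nonneg)
  show "(\<lambda>h. indicator S h *\<^sub>R f h) \<in> borel_measurable lborel" using S f by measurable
  show "AE h in lborel. 0 \<le> indicator S h *\<^sub>R f h" using f0 by (simp add: indicator_def)
  have "ennreal (indicator S h *\<^sub>R f h) \<le> (\<Sum>k. ennreal (B k) * indicator (A k) h)" for h
  proof (cases "h \<in> S")
    case True
    then obtain k where k: "h \<in> A k" using cover by blast
    then have "ennreal (indicator S h *\<^sub>R f h) \<le> ennreal (B k)"
      using True bound by (simp add: ennreal_leI)
    also have "\<dots> = (\<Sum>i\<in>{k}. ennreal (B i) * indicator (A i) h)" using k by simp
    also have "\<dots> \<le> (\<Sum>i. ennreal (B i) * indicator (A i) h)"
      by (rule sum_le_suminf) (auto simp: summableI)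
    finally show ?thesis .
  qed simp
  then have "(\<integral>\<^sup>+ h. ennreal (indicator S h *\<^sub>R f h) \<partial>lborel)
      \<le> (\<integral>\<^sup>+ h. (\<Sum>k. ennreal (B k) * indicator (A k) h) \<partial>lborel)"
    by (rule nn_integral_mono)
  also have "\<dots> = (\<Sum>k. ennreal (B k) * emeasure lborel (A k))"
    using A by (simp add: nn_integral_suminf nn_integral_cmult_indicator)
  also have "\<dots> \<le> (\<Sum>k. ennreal (B k) * emeasure lborel (ball (0::'a) (R k)))"
    using radius by (intro suminf_le summableI mult_left_mono emeasure_mono) auto
  also have "\<dots> = (\<Sum>k. ennreal (unit_ball_vol DIM('a) * (B k * R k ^ DIM('a))))"
    using B R by (simp add: emeasure_ball ennreal_mult'' mult_ac)
  also have "\<dots> < \<infinity>"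
  proof -
    have "summable (\<lambda>k. unit_ball_vol DIM('a) * (B k * R k ^ DIM('a)))"
      using summable by (rule summable_mult)
    then show ?thesis using B R by (simp add: ennreal_suminf_neq_top less_top[symmetric])
  qed
  finally show "(\<integral>\<^sup>+ h. ennreal (indicator S h *\<^sub>R f h) \<partial>lborel) < \<infinity>" .
qed

lemma set_integrable_inverse_norm_powr_outside_ball:
  fixes a r :: real
  assumes a: "DIM('a) < a" and r: "0 < r"
  shows "set_integrable lborel {h::'a::euclidean_space. r \<le> norm h} (\<lambda>h. 1 / norm h powr a)"
proof (rule set_integrable_shells)
  show "{h::'a. r \<le> norm h} \<in> sets lborel" "(\<lambda>h::'a. 1 / norm h powr a) \<in> borel_measurable lborel"
    by auto
  show "0 \<le> 1 / norm h powr a" for h :: 'a by simp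
  define \<rho> where "\<rho> k = r * 2 ^ k" for k
  have \<rho>: "0 < \<rho> k" for k using r by (simp add: \<rho>_def)
  show "{h::'a. \<rho> k \<le> norm h \<and> norm h < 2 * \<rho> k} \<in> sets lborel" for k by simp
  show "\<exists>k. h \<in> {h::'a. \<rho> k \<le> norm h \<and> norm h < 2 * \<rho> k}" if h: "h \<in> {h. r \<le> norm h}" for h
  proof -
    obtain k where "2 ^ k \<le> norm h / r" "norm h / r < 2 ^ Suc k"
      using ex_power2_interval[of "norm h / r"] h r by auto
    then show ?thesis using r by (auto simp: \<rho>_def field_simps)
  qed
  show "1 / norm h powr a \<le> 1 / \<rho> k powr a"
    if h: "h \<in> {h::'a. \<rho> k \<le> norm h \<and> norm h < 2 * \<rho> k}" for k h
  proof -
    have "\<rho> k powr a \<le> norm h powr a" using h \<rho>[of k] a by (intro powr_mono2) auto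
    then show ?thesis using \<rho>[of k] by (intro frac_le) auto
  qed
  show "{h::'a. \<rho> k \<le> norm h \<and> norm h < 2 * \<rho> k} \<subseteq> ball 0 (2 * \<rho> k)" for k by auto
  show "0 \<le> 1 / \<rho> k powr a" "0 \<le> 2 * \<rho> k" for k using \<rho>[of k] by auto
  have "1 / \<rho> k powr a * (2 * \<rho> k) ^ DIM('a)
      = 2 ^ DIM('a) * r powr (DIM('a) - a) * (2 powr (DIM('a) - a)) ^ k" for k
  proof -
    have "1 / \<rho> k powr a * (2 * \<rho> k) ^ DIM('a) = 2 ^ DIM('a) * \<rho> k powr (DIM('a) - a)"
      using \<rho>[of k] by (simp add: powr_diff powr_realpow power_mult_distrib)
    also have "\<dots> = 2 ^ DIM('a) * r powr (DIM('a) - a) * (2 powr (DIM('a) - a)) ^ k"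
      using r by (simp add: \<rho>_def powr_mult_power)
    finally show ?thesis .
  qed
  moreover have "summable (\<lambda>k. 2 ^ DIM('a) * r powr (DIM('a) - a) * (2 powr (DIM('a) - a)) ^ k)"
    using a by (intro summable_mult summable_geometric) (simp add: powr_less_one)
  ultimately show "summable (\<lambda>k. 1 / \<rho> k powr a * (2 * \<rho> k) ^ DIM('a))" by simp
qed

lemma set_integrable_sq_div_norm_powr_ball:
  fixes a r :: real
  assumes a: "0 \<le> a" "a < DIM('a) + 2" and r: "0 < r"
  shows "set_integrable lborel {h::'a::euclidean_space. 0 < norm h \<and> norm h < r}
    (\<lambda>h. norm h ^ 2 / norm h powr a)"
proof (rule set_integrable_shells)
  show "{h::'a. 0 < norm h \<and> norm h < r} \<in> sets lborel"
    "(\<lambda>h::'a. norm h ^ 2 / norm h powr a) \<in> borel_measurable lborel"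
    by auto
  show "0 \<le> norm h ^ 2 / norm h powr a" for h :: 'a by simp
  define \<rho> where "\<rho> k = r * (1/2) ^ k" for k
  have \<rho>: "0 < \<rho> k" for k using r by (simp add: \<rho>_def)
  show "{h::'a. \<rho> k / 2 < norm h \<and> norm h \<le> \<rho> k} \<in> sets lborel" for k by simp
  show "\<exists>k. h \<in> {h::'a. \<rho> k / 2 < norm h \<and> norm h \<le> \<rho> k}"
    if h: "h \<in> {h. 0 < norm h \<and> norm h < r}" for h
  proof -
    obtain k where "2 ^ k \<le> r / norm h" "r / norm h < 2 ^ Suc k"
      using ex_power2_interval[of "r / norm h"] h by auto
    then show ?thesis using h by (auto simp: \<rho>_def field_simps)
  qed
  show "norm h ^ 2 / norm h powr a \<le> \<rho> k ^ 2 / (\<rho> k / 2) powr a"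
    if h: "h \<in> {h::'a. \<rho> k / 2 < norm h \<and> norm h \<le> \<rho> k}" for k h
  proof -
    have "norm h ^ 2 \<le> \<rho> k ^ 2" using h by (intro power_mono) auto
    moreover have "(\<rho> k / 2) powr a \<le> norm h powr a" using h \<rho>[of k] a by (intro powr_mono2) auto
    ultimately show ?thesis using \<rho>[of k] by (intro frac_le) auto
  qed
  show "{h::'a. \<rho> k / 2 < norm h \<and> norm h \<le> \<rho> k} \<subseteq> ball 0 (2 * \<rho> k)" for k
    using \<rho>[of k] by auto
  show "0 \<le> \<rho> k ^ 2 / (\<rho> k / 2) powr a" "0 \<le> 2 * \<rho> k" for k using \<rho>[of k] by auto
  have "\<rho> k ^ 2 / (\<rho> k / 2) powr a * (2 * \<rho> k) ^ DIM('a)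
      = 2 powr (DIM('a) + a) * r powr (DIM('a) + 2 - a) * ((1/2) powr (DIM('a) + 2 - a)) ^ k" for k
  proof -
    have "\<rho> k ^ 2 / (\<rho> k / 2) powr a * (2 * \<rho> k) ^ DIM('a)
        = 2 powr (DIM('a) + a) * \<rho> k powr (DIM('a) + 2 - a)"
    proof -
      have "(2 * \<rho> k) ^ DIM('a) = 2 powr DIM('a) * \<rho> k powr DIM('a)"
        using \<rho>[of k] by (simp add: powr_realpow power_mult_distrib)
      then show ?thesis using \<rho>[of k] by (simp add: powr_add powr_diff powr_divide field_simps)
    qed
    also have "\<dots>
        = 2 powr (DIM('a) + a) * r powr (DIM('a) + 2 - a) * ((1/2) powr (DIM('a) + 2 - a)) ^ k"
      using r by (simp add: \<rho>_def powr_mult_power)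
    finally show ?thesis .
  qed
  moreover have "summable (\<lambda>k.
      2 powr (DIM('a) + a) * r powr (DIM('a) + 2 - a) * ((1/2) powr (DIM('a) + 2 - a)) ^ k)"
    using a by (intro summable_mult summable_geometric) (simp add: powr01_less_one)
  ultimately show "summable (\<lambda>k. \<rho> k ^ 2 / (\<rho> k / 2) powr a * (2 * \<rho> k) ^ DIM('a))" by simp
qed

lemma integrable_min_sq_div_norm_powr:
  fixes a :: real
  assumes a: "DIM('a) < a" "a < DIM('a) + 2"
  shows "integrable lborel (\<lambda>h::'a::euclidean_space. min (norm h ^ 2) 1 / norm h powr a)"
proof -
  have "set_integrable lborel {h::'a. 0 < norm h \<and> norm h < 1} (\<lambda>h. norm h ^ 2 / norm h powr a)"
    using a by (intro set_integrable_sq_div_norm_powr_ball) auto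
  moreover have "set_integrable lborel {h::'a. 1 \<le> norm h} (\<lambda>h. 1 / norm h powr a)"
    using a by (intro set_integrable_inverse_norm_powr_outside_ball) auto
  ultimately have "integrable lborel (\<lambda>h::'a.
      indicator {h. 0 < norm h \<and> norm h < 1} h *\<^sub>R (norm h ^ 2 / norm h powr a)
      + indicator {h. 1 \<le> norm h} h *\<^sub>R (1 / norm h powr a))"
    unfolding set_integrable_def by (rule Bochner_Integration.integrable_add)
  moreover have "indicator {h. 0 < norm h \<and> norm h < 1} h *\<^sub>R (norm h ^ 2 / norm h powr a)
      + indicator {h. 1 \<le> norm h} h *\<^sub>R (1 / norm h powr a) = min (norm h ^ 2) 1 / norm h powr a" for h :: 'a
  proof (cases "norm h < 1")
    case True
    then have "min (norm h ^ 2) 1 = norm h ^ 2" by (simp add: min_absorb1 power_le_one)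
    with True show ?thesis by (simp add: indicator_def)
  next
    case False
    then have "min (norm h ^ 2) 1 = 1" by (simp add: min_absorb2 one_le_power)
    with False show ?thesis by (simp add: indicator_def)
  qed
  ultimately show ?thesis by simp
qed

section \<open>Test functions\<close>

lemma dderiv_eq_0_outside_tsupport:
  fixes f :: "'a::euclidean_space \<Rightarrow> real"
  assumes "z \<notin> tsupport f"
  shows "dderiv vs f z = 0"
  using assms
proof (induction vs arbitrary: z)
  case Nil
  then show ?case using closure_subset[of "{x. f x \<noteq> 0}"] by (auto simp: tsupport_def)
next
  case (Cons v vs)
  have "(dderiv vs f has_derivative (\<lambda>_. 0)) (at z)"
    by (rule has_derivative_transform_within_open[where f="\<lambda>_. 0" and s="- tsupport f"])
       (use Cons in \<open>auto simp: tsupport_def\<close>)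
  then show ?case by (simp add: frechet_derivative_at[symmetric])
qed

lemma test_fun_continuous_dderiv:
  fixes f :: "'a::euclidean_space \<Rightarrow> real"
  assumes "test_fun f" and "set vs \<subseteq> Basis"
  shows "continuous_on UNIV (dderiv vs f)"
  using assms unfolding test_fun_def smooth_def
  by (intro continuous_at_imp_continuous_on ballI differentiable_imp_continuous_within) auto

lemma test_fun_borel_measurable:
  fixes f :: "'a::euclidean_space \<Rightarrow> real"
  assumes "test_fun f"
  shows "f \<in> borel_measurable borel"
  using test_fun_continuous_dderiv[OF assms, of "[]"] by (simp add: borel_measurable_continuous_onI)

lemma test_fun_bdd_above_dderiv:
  fixes f :: "'a::euclidean_space \<Rightarrow> real"
  assumes f: "test_fun f" and vs: "set vs \<subseteq> Basis"
  shows "bdd_above (range (\<lambda>x. \<bar>dderiv vs f x\<bar>))"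
proof -
  have "compact (dderiv vs f ` tsupport f)"
    using f continuous_on_subset[OF test_fun_continuous_dderiv[OF f vs] subset_UNIV]
    unfolding test_fun_def by (intro compact_continuous_image) auto
  then obtain B where B: "\<forall>y \<in> dderiv vs f ` tsupport f. norm y \<le> B"
    using compact_imp_bounded bounded_iff by blast
  have "\<bar>dderiv vs f x\<bar> \<le> max B 0" for x
    using B dderiv_eq_0_outside_tsupport[of x f vs] by (cases "x \<in> tsupport f") auto
  then show ?thesis by (intro bdd_aboveI) auto
qed

lemma abs_dderiv_le_Cm_seminorm:
  fixes f :: "'a::euclidean_space \<Rightarrow> real"
  assumes f: "test_fun f" and vs: "set vs \<subseteq> Basis" "length vs \<le> m"
  shows "\<bar>dderiv vs f x\<bar> \<le> Cm_seminorm m f"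
proof -
  have sup: "\<bar>dderiv ws f y\<bar> \<le> (SUP x. \<bar>dderiv ws f x\<bar>)" if "set ws \<subseteq> Basis" for ws y
    using test_fun_bdd_above_dderiv[OF f that] by (intro cSUP_upper) auto
  have nonneg: "0 \<le> (SUP x. \<bar>dderiv ws f x\<bar>)" if "set ws \<subseteq> Basis" for ws
    by (rule order_trans[OF abs_ge_zero sup[OF that]])
  have fin: "finite {vs::'a list. set vs \<subseteq> Basis \<and> length vs \<le> m}"
    by (rule finite_lists_length_le) simp
  have "(SUP x. \<bar>dderiv vs f x\<bar>) \<le> Cm_seminorm m f"
    unfolding Cm_seminorm_def by (rule member_le_sum) (use vs nonneg fin in auto)
  then show ?thesis using sup[OF vs(1), of x] by linarith
qed

lemma Cm_seminorm_nonneg: "test_fun f \<Longrightarrow> 0 \<le> Cm_seminorm m f"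
  using abs_dderiv_le_Cm_seminorm[of f "[]" m 0] by simp

lemma has_real_derivative_along_line:
  fixes f :: "'a::euclidean_space \<Rightarrow> real"
  assumes "\<And>y. f differentiable (at y)"
  shows "((\<lambda>t. f (z + t *\<^sub>R v)) has_real_derivative
           (\<Sum>b\<in>Basis. (v \<bullet> b) * dderiv [b] f (z + t *\<^sub>R v))) (at t)"
proof -
  define F where "F = frechet_derivative f (at (z + t *\<^sub>R v))"
  have F: "(f has_derivative F) (at (z + t *\<^sub>R v))"
    unfolding F_def using assms frechet_derivative_works by blast
  have "((\<lambda>t. z + t *\<^sub>R v) has_derivative (\<lambda>d. d *\<^sub>R v)) (at t)"
    by (auto intro!: derivative_eq_intros)
  from has_derivative_compose[OF this F]
  have "((\<lambda>t. f (z + t *\<^sub>R v)) has_derivative (\<lambda>d. F (d *\<^sub>R v))) (at t)" .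
  moreover have "F (d *\<^sub>R v) = (\<Sum>b\<in>Basis. (v \<bullet> b) * dderiv [b] f (z + t *\<^sub>R v)) * d" for d
    using linear_cmul[OF has_derivative_linear[OF F]]
      Linear_Algebra.linear_componentwise[OF has_derivative_linear[OF F], of v 1]
    by (simp add: F_def)
  ultimately show ?thesis by (simp add: has_field_derivative_def)
qed

lemma second_difference_le:
  fixes \<phi> \<phi>' \<phi>'' :: "real \<Rightarrow> real"
  assumes \<phi>': "\<And>t. (\<phi> has_real_derivative \<phi>' t) (at t)"
    and \<phi>'': "\<And>t. (\<phi>' has_real_derivative \<phi>'' t) (at t)"
    and bound: "\<And>t. \<bar>\<phi>'' t\<bar> \<le> B"
  shows "\<bar>\<phi> 1 + \<phi> (-1) - 2 * \<phi> 0\<bar> \<le> 2 * B"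
proof -
  have "((\<lambda>t. \<phi> t + \<phi> (- t)) has_real_derivative (\<phi>' t - \<phi>' (-t))) (at t)" for t
    by (auto intro!: derivative_eq_intros DERIV_chain2[OF \<phi>'] \<phi>')
  then obtain \<xi> where \<xi>: "0 < \<xi>" "\<xi> < 1" "\<phi> 1 + \<phi> (-1) - 2 * \<phi> 0 = \<phi>' \<xi> - \<phi>' (-\<xi>)"
    using MVT2[of 0 1 "\<lambda>t. \<phi> t + \<phi> (- t)"] by force
  obtain \<eta> where "\<phi>' \<xi> - \<phi>' (-\<xi>) = 2 * \<xi> * \<phi>'' \<eta>"
    using MVT2[of "-\<xi>" \<xi> \<phi>' \<phi>''] \<phi>'' \<xi> by auto
  then have "\<bar>\<phi> 1 + \<phi> (-1) - 2 * \<phi> 0\<bar> = 2 * \<xi> * \<bar>\<phi>'' \<eta>\<bar>"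
    using \<xi> by (simp add: abs_mult)
  also have "\<dots> \<le> 2 * 1 * B"
    using \<xi> bound[of \<eta>] by (intro mult_mono) auto
  finally show ?thesis by simp
qed

lemma abs_sum_Basis_inner_le:
  fixes v :: "'a::euclidean_space"
  shows "\<bar>\<Sum>b\<in>Basis. (v \<bullet> b) * g b\<bar> \<le> norm v * (\<Sum>b\<in>Basis. \<bar>g b\<bar>)"
proof -
  have "\<bar>\<Sum>b\<in>Basis. (v \<bullet> b) * g b\<bar> \<le> (\<Sum>b\<in>Basis. \<bar>(v \<bullet> b) * g b\<bar>)"
    by (rule sum_abs)
  also have "\<dots> \<le> (\<Sum>b\<in>Basis. norm v * \<bar>g b\<bar>)"
    by (intro sum_mono) (simp add: abs_mult mult_right_mono Basis_le_norm)
  finally show ?thesis by (simp add: sum_distrib_left)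
qed

lemma test_fun_second_difference_le:
  fixes f :: "'a::euclidean_space \<Rightarrow> real"
  assumes f: "test_fun f"
  shows "\<bar>f (z + v) + f (z - v) - 2 * f z\<bar> \<le> 2 * DIM('a)^2 * norm v ^ 2 * Cm_seminorm 2 f"
proof -
  define N where "N = Cm_seminorm 2 f"
  have diff: "dderiv vs f differentiable (at y)" if "set vs \<subseteq> Basis" for vs y
    using f that by (simp add: test_fun_def smooth_def)
  define \<phi>' where "\<phi>' t = (\<Sum>b\<in>Basis. (v \<bullet> b) * dderiv [b] f (z + t *\<^sub>R v))" for t
  define \<phi>'' where
    "\<phi>'' t = (\<Sum>b\<in>Basis. (v \<bullet> b) * (\<Sum>c\<in>Basis. (v \<bullet> c) * dderiv [c, b] f (z + t *\<^sub>R v)))" for t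
  have "((\<lambda>t. f (z + t *\<^sub>R v)) has_real_derivative \<phi>' t) (at t)" for t
    unfolding \<phi>'_def by (rule has_real_derivative_along_line) (use diff[of "[]"] in simp)
  moreover have "(\<phi>' has_real_derivative \<phi>'' t) (at t)" for t
    unfolding \<phi>'_def \<phi>''_def
  proof (intro DERIV_sum DERIV_cmult)
    fix b :: 'a assume "b \<in> Basis"
    then show "((\<lambda>t. dderiv [b] f (z + t *\<^sub>R v)) has_real_derivative
        (\<Sum>c\<in>Basis. (v \<bullet> c) * dderiv [c, b] f (z + t *\<^sub>R v))) (at t)"
      using has_real_derivative_along_line[of "dderiv [b] f" z v t] diff[of "[b]"] by simp
  qed
  moreover have "\<bar>\<phi>'' t\<bar> \<le> DIM('a)^2 * norm v ^ 2 * N" for t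
  proof -
    have inner:
      "\<bar>\<Sum>c\<in>Basis. (v \<bullet> c) * dderiv [c, b] f (z + t *\<^sub>R v)\<bar> \<le> norm v * (DIM('a) * N)"
      if b: "b \<in> Basis" for b :: 'a
    proof -
      have "\<bar>\<Sum>c\<in>Basis. (v \<bullet> c) * dderiv [c, b] f (z + t *\<^sub>R v)\<bar>
          \<le> norm v * (\<Sum>c\<in>Basis. \<bar>dderiv [c, b] f (z + t *\<^sub>R v)\<bar>)"
        by (rule abs_sum_Basis_inner_le)
      also have "\<dots> \<le> norm v * (\<Sum>c\<in>(Basis::'a set). N)"
        unfolding N_def using b
        by (intro mult_left_mono sum_mono abs_dderiv_le_Cm_seminorm[OF f]) auto
      finally show ?thesis by simp
    qed
    have "\<bar>\<phi>'' t\<bar>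
        \<le> norm v * (\<Sum>b\<in>Basis. \<bar>\<Sum>c\<in>Basis. (v \<bullet> c) * dderiv [c, b] f (z + t *\<^sub>R v)\<bar>)"
      unfolding \<phi>''_def by (rule abs_sum_Basis_inner_le)
    also have "\<dots> \<le> norm v * (\<Sum>b\<in>(Basis::'a set). norm v * (DIM('a) * N))"
      using inner by (intro mult_left_mono sum_mono) auto
    finally show ?thesis by (simp add: power2_eq_square mult_ac)
  qed
  ultimately have "\<bar>f (z + 1 *\<^sub>R v) + f (z + (-1) *\<^sub>R v) - 2 * f (z + 0 *\<^sub>R v)\<bar>
      \<le> 2 * (DIM('a)^2 * norm v ^ 2 * N)"
    by (rule second_difference_le)
  then show ?thesis by (simp add: N_def mult_ac)
qed

section \<open>Shears of the product space\<close>

lemma measurable_shear: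
  "(\<lambda>z::'a::euclidean_space \<times> 'a. (fst z, fst z + c *\<^sub>R snd z)) \<in> lborel \<rightarrow>\<^sub>M lborel"
  unfolding measurable_lborel1 measurable_lborel2
  by (intro borel_measurable_continuous_onI continuous_intros)

lemma lborel_shear:
  fixes c :: real
  assumes c: "\<bar>c\<bar> = 1"
  shows "distr lborel lborel (\<lambda>z::'a::euclidean_space \<times> 'a. (fst z, fst z + c *\<^sub>R snd z)) = lborel"
    (is "distr lborel lborel ?T = lborel")
proof (rule measure_eqI)
  have T: "?T \<in> lborel \<rightarrow>\<^sub>M lborel" by (rule measurable_shear)
  show "sets (distr lborel lborel ?T) = sets lborel" by simp
  fix A assume "A \<in> sets (distr lborel lborel ?T)"
  then have A: "A \<in> sets lborel" by simp
  then have A2: "A \<in> sets (lborel \<Otimes>\<^sub>M (lborel :: 'a measure))" by (simp only: lborel_prod)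
  have translate: "distr lborel borel (\<lambda>h. x + c *\<^sub>R h) = (lborel :: 'a measure)" for x :: 'a
    using lborel_affine[of c x] c by (auto simp: density_1)
  have slice: "(\<integral>\<^sup>+ h. indicator A (x, x + c *\<^sub>R h) \<partial>lborel) = emeasure lborel (Pair x -` A)" for x
  proof -
    have Ax: "Pair x -` A \<in> sets borel" using sets_Pair1[OF A2] by simp
    have "(\<integral>\<^sup>+ h. indicator A (x, x + c *\<^sub>R h) \<partial>lborel)
        = (\<integral>\<^sup>+ h. indicator (Pair x -` A) (x + c *\<^sub>R h) \<partial>lborel)"
      by (simp add: indicator_def)
    also have "\<dots> = (\<integral>\<^sup>+ y. indicator (Pair x -` A) y \<partial>distr lborel borel (\<lambda>h. x + c *\<^sub>R h))"
      using Ax by (intro nn_integral_distr[symmetric]) auto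
    also have "\<dots> = emeasure lborel (Pair x -` A)"
      using Ax by (simp add: translate)
    finally show ?thesis .
  qed
  have "emeasure (distr lborel lborel ?T) A = (\<integral>\<^sup>+ z. indicator A z \<partial>distr lborel lborel ?T)"
    using A by simp
  also have "\<dots> = (\<integral>\<^sup>+ z. indicator A (?T z) \<partial>lborel)"
    using A T by (intro nn_integral_distr) auto
  also have "\<dots> = (\<integral>\<^sup>+ x. \<integral>\<^sup>+ h. indicator A (x, x + c *\<^sub>R h) \<partial>lborel \<partial>lborel)"
  proof -
    have "(\<lambda>z. indicator A (?T z) :: ennreal) \<in> borel_measurable (lborel \<Otimes>\<^sub>M lborel)"
      using measurable_comp[OF T borel_measurable_indicator[OF A]] by (simp add: lborel_prod comp_def)
    from lborel.nn_integral_fst[OF this] show ?thesis by (simp add: lborel_prod)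
  qed
  also have "\<dots> = (\<integral>\<^sup>+ x. emeasure lborel (Pair x -` A) \<partial>lborel)"
    by (simp add: slice)
  also have "\<dots> = emeasure lborel A"
    using lborel.emeasure_pair_measure_alt[OF A2] by (simp add: lborel_prod)
  finally show "emeasure (distr lborel lborel ?T) A = emeasure lborel A" .
qed

lemma integrable_pair_measure_mult:
  fixes f :: "'a \<Rightarrow> real" and g :: "'b \<Rightarrow> real"
  assumes N: "sigma_finite_measure N" and f: "integrable M f" and g: "integrable N g"
  shows "integrable (M \<Otimes>\<^sub>M N) (\<lambda>z. f (fst z) * g (snd z))"
proof (rule integrableI_bounded)
  have [measurable]: "f \<in> borel_measurable M" "g \<in> borel_measurable N" using f g by auto
  show "(\<lambda>z. f (fst z) * g (snd z)) \<in> borel_measurable (M \<Otimes>\<^sub>M N)" by measurable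
  have "(\<integral>\<^sup>+ z. ennreal (norm (f (fst z) * g (snd z))) \<partial>(M \<Otimes>\<^sub>M N))
      = (\<integral>\<^sup>+ x. \<integral>\<^sup>+ y. ennreal (norm (f x)) * ennreal (norm (g y)) \<partial>N \<partial>M)"
    by (simp add: sigma_finite_measure.nn_integral_fst[OF N, symmetric] abs_mult ennreal_mult
        split_beta')
  also have "\<dots> = (\<integral>\<^sup>+ x. ennreal (norm (f x)) \<partial>M) * (\<integral>\<^sup>+ y. ennreal (norm (g y)) \<partial>N)"
    by (simp add: nn_integral_cmult nn_integral_multc)
  also have "\<dots> < \<infinity>"
    using f g by (simp add: integrable_iff_bounded ennreal_mult_less_top)
  finally show "(\<integral>\<^sup>+ z. ennreal (norm (f (fst z) * g (snd z))) \<partial>(M \<Otimes>\<^sub>M N)) < \<infinity>" .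
qed

lemma
  fixes f :: "'a::euclidean_space \<times> 'a \<Rightarrow> real"
  assumes c: "\<bar>c\<bar> = 1" and f: "f \<in> borel_measurable lborel"
  shows integrable_shear_iff:
      "integrable lborel (\<lambda>z. f (fst z, fst z + c *\<^sub>R snd z)) \<longleftrightarrow> integrable lborel f"
    and integral_shear: "(\<integral>z. f (fst z, fst z + c *\<^sub>R snd z) \<partial>lborel) = integral\<^sup>L lborel f"
  using integrable_distr_eq[OF measurable_shear f, of c] integral_distr[OF measurable_shear f, of c]
  unfolding lborel_shear[OF c] by simp_all

lemma integrable_indicator_fst_mult:
  fixes P :: "'a::euclidean_space set" and g :: "'b::euclidean_space \<Rightarrow> real"
  assumes P: "compact P" and g: "integrable lborel g"
  shows "integrable lborel (\<lambda>z::'a \<times> 'b. indicator P (fst z) * g (snd z))"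
proof -
  have "integrable lborel (indicator P :: 'a \<Rightarrow> real)"
    using P by (intro integrable_real_indicator emeasure_bounded_finite compact_imp_bounded)
      (auto simp: compact_imp_closed borel_closed)
  from integrable_pair_measure_mult[OF lborel.sigma_finite_measure_axioms this g]
  show ?thesis by (simp add: lborel_prod)
qed

section \<open>The symmetrized kernel\<close>

definition sym_kernel_S ::
    "real \<Rightarrow> ((real^'n) \<times> (real^'n) \<Rightarrow> real) \<Rightarrow> (real^'n) \<times> (real^'n) \<Rightarrow> real" where
  "sym_kernel_S s \<Phi> z =
     (\<Phi> (fst z, fst z + snd z) + \<Phi> (fst z, fst z - snd z) - 2 * \<Phi> (fst z, fst z))
     / (2 * norm (snd z) powr (real CARD('n) + 2 * s))"

lemma test_fun_measurable_pair:
  fixes \<Phi> :: "'a::euclidean_space \<times> 'b::euclidean_space \<Rightarrow> real"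
  assumes "test_fun \<Phi>"
  shows "\<Phi> \<in> borel_measurable (lborel \<Otimes>\<^sub>M lborel)"
  using test_fun_borel_measurable[OF assms] by (simp add: lborel_prod)

lemma kernel_S_measurable:
  fixes \<Phi> :: "(real^'n) \<times> (real^'n) \<Rightarrow> real"
  assumes "test_fun \<Phi>"
  shows "kernel_S s \<Phi> \<in> borel_measurable lborel"
proof -
  have [measurable]: "\<Phi> \<in> borel_measurable (lborel \<Otimes>\<^sub>M lborel)"
    by (rule test_fun_measurable_pair[OF assms])
  have "kernel_S s \<Phi> \<in> borel_measurable (lborel \<Otimes>\<^sub>M lborel)"
    unfolding kernel_S_def[abs_def] by measurable
  then show ?thesis by (simp add: lborel_prod)
qed

lemma sym_kernel_S_measurable:
  fixes \<Phi> :: "(real^'n) \<times> (real^'n) \<Rightarrow> real"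
  assumes "test_fun \<Phi>"
  shows "sym_kernel_S s \<Phi> \<in> borel_measurable lborel"
proof -
  have [measurable]: "\<Phi> \<in> borel_measurable (lborel \<Otimes>\<^sub>M lborel)"
    by (rule test_fun_measurable_pair[OF assms])
  have "sym_kernel_S s \<Phi> \<in> borel_measurable (lborel \<Otimes>\<^sub>M lborel)"
    unfolding sym_kernel_S_def[abs_def] by measurable
  then show ?thesis by (simp add: lborel_prod)
qed

lemma abs_test_fun_le_indicator_fst:
  fixes \<Phi> :: "'a::euclidean_space \<times> 'b::euclidean_space \<Rightarrow> real"
  assumes \<Phi>: "test_fun \<Phi>" and K: "tsupport \<Phi> \<subseteq> K"
  shows "\<bar>\<Phi> (x, y)\<bar> \<le> indicator (fst ` K) x * Cm_seminorm m \<Phi>"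
proof (cases "x \<in> fst ` K")
  case True
  then show ?thesis using abs_dderiv_le_Cm_seminorm[OF \<Phi>, of "[]" m "(x, y)"] by simp
next
  case False
  then have "(x, y) \<notin> tsupport \<Phi>" using K by force
  then show ?thesis
    using dderiv_eq_0_outside_tsupport[of "(x, y)" \<Phi> "[]"] Cm_seminorm_nonneg[OF \<Phi>] by simp
qed

definition sym_kernel_majorant :: "real \<Rightarrow> (real^'n) set \<Rightarrow> (real^'n) \<times> (real^'n) \<Rightarrow> real" where
  "sym_kernel_majorant s P z = indicator P (fst z) * (2 * DIM((real^'n) \<times> (real^'n))^2
     * (min (norm (snd z) ^ 2) 1 / norm (snd z) powr (real CARD('n) + 2 * s)))"

lemma abs_sym_kernel_S_le:
  fixes \<Phi> :: "(real^'n) \<times> (real^'n) \<Rightarrow> real"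
  assumes \<Phi>: "test_fun \<Phi>" and K: "tsupport \<Phi> \<subseteq> K"
  shows "\<bar>sym_kernel_S s \<Phi> z\<bar> \<le> Cm_seminorm 2 \<Phi> * sym_kernel_majorant s (fst ` K) z"
proof -
  obtain x h where z: "z = (x, h)" by fastforce
  define D where "D = real DIM((real^'n) \<times> (real^'n))"
  define N where "N = Cm_seminorm 2 \<Phi>"
  define \<Delta> where "\<Delta> = \<Phi> (x, x + h) + \<Phi> (x, x - h) - 2 * \<Phi> (x, x)"
  have D: "1 \<le> D" by (simp add: D_def del: DIM_prod)
  have N: "0 \<le> N" using Cm_seminorm_nonneg[OF \<Phi>] by (simp add: N_def)
  have near: "\<bar>\<Delta>\<bar> \<le> 2 * (D^2 * N * norm h ^ 2)"
    using test_fun_second_difference_le[OF \<Phi>, of "(x, x)" "(0, h)"]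
    by (simp add: \<Delta>_def D_def N_def norm_Pair mult_ac)
  have \<Phi>_le: "\<bar>\<Phi> z\<bar> \<le> N" for z
    using abs_dderiv_le_Cm_seminorm[OF \<Phi>, of "[]" 2 z] by (simp add: N_def)
  have "\<bar>\<Delta>\<bar> \<le> 4 * N"
    using \<Phi>_le[of "(x, x + h)"] \<Phi>_le[of "(x, x - h)"] \<Phi>_le[of "(x, x)"]
    unfolding \<Delta>_def by arith
  moreover have "N \<le> D^2 * N"
    using mult_right_mono[OF one_le_power[OF D, of 2] N] by simp
  ultimately have far: "\<bar>\<Delta>\<bar> \<le> 4 * (D^2 * N)" by linarith
  have \<Delta>: "\<bar>\<Delta>\<bar> \<le> 4 * (D^2 * N * min (norm h ^ 2) 1)"
  proof (cases "norm h ^ 2 \<le> 1")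
    case True
    have "0 \<le> D^2 * N * norm h ^ 2" using N by simp
    with near True show ?thesis by (simp add: min_def)
  qed (use far in \<open>simp add: min_def\<close>)
  show ?thesis
  proof (cases "x \<in> fst ` K")
    case True
    have "\<bar>sym_kernel_S s \<Phi> z\<bar> = \<bar>\<Delta>\<bar> / (2 * norm h powr (real CARD('n) + 2 * s))"
      by (simp add: z sym_kernel_S_def \<Delta>_def)
    also have "\<dots>
        \<le> 4 * (D^2 * N * min (norm h ^ 2) 1) / (2 * norm h powr (real CARD('n) + 2 * s))"
      using \<Delta> by (intro divide_right_mono) auto
    finally show ?thesis using True by (simp add: z sym_kernel_majorant_def D_def N_def mult_ac)
  next
    case False
    then have "\<Phi> (x, y) = 0" for y
      using abs_test_fun_le_indicator_fst[OF \<Phi> K, of x y 0] by simp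
    then show ?thesis using False by (simp add: z sym_kernel_S_def sym_kernel_majorant_def)
  qed
qed

lemma integrable_sym_kernel_majorant:
  fixes K :: "((real^'n) \<times> (real^'n)) set"
  assumes s: "0 < s" "s < 1" and K: "compact K"
  shows "integrable lborel (sym_kernel_majorant s (fst ` K))"
proof -
  have "compact (fst ` K)" using K by (intro compact_continuous_image continuous_intros)
  moreover have "integrable lborel
      (\<lambda>h::real^'n. min (norm h ^ 2) 1 / norm h powr (real CARD('n) + 2 * s))"
    using s by (intro integrable_min_sq_div_norm_powr) auto
  then have "integrable lborel (\<lambda>h::real^'n. 2 * DIM((real^'n) \<times> (real^'n))^2
      * (min (norm h ^ 2) 1 / norm h powr (real CARD('n) + 2 * s)))"
    by (rule integrable_mult_right)
  ultimately show ?thesis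
    unfolding sym_kernel_majorant_def[abs_def] by (rule integrable_indicator_fst_mult)
qed

lemma integrable_sym_kernel_S:
  fixes \<Phi> :: "(real^'n) \<times> (real^'n) \<Rightarrow> real"
  assumes s: "0 < s" "s < 1" and \<Phi>: "test_fun \<Phi>"
  shows "integrable lborel (sym_kernel_S s \<Phi>)"
proof (rule Bochner_Integration.integrable_bound)
  show "integrable lborel (\<lambda>z. Cm_seminorm 2 \<Phi> * sym_kernel_majorant s (fst ` tsupport \<Phi>) z)"
    using s \<Phi> unfolding test_fun_def
    by (intro integrable_mult_right integrable_sym_kernel_majorant) auto
  show "sym_kernel_S s \<Phi> \<in> borel_measurable lborel" by (rule sym_kernel_S_measurable[OF \<Phi>])
  show "AE z in lborel. norm (sym_kernel_S s \<Phi> z)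
      \<le> norm (Cm_seminorm 2 \<Phi> * sym_kernel_majorant s (fst ` tsupport \<Phi>) z)"
    using abs_sym_kernel_S_le[OF \<Phi> order_refl]
    by (intro AE_I2) (simp add: order_trans[OF _ abs_ge_self])
qed

section \<open>The truncated integrals\<close>

lemma Bc_sets: "Bc \<epsilon> \<in> sets (lborel :: ((real^'n) \<times> (real^'n)) measure)"
proof -
  have "closed (Bc \<epsilon> :: ((real^'n) \<times> (real^'n)) set)"
    unfolding Bc_def by (intro closed_Collect_le continuous_intros)
  then show ?thesis by (simp add: borel_closed)
qed

lemma kernel_S_translate:
  fixes \<Phi> :: "(real^'n) \<times> (real^'n) \<Rightarrow> real"
  shows "kernel_S s \<Phi> (x, x + h) = (\<Phi> (x, x + h) - \<Phi> (x, x)) / norm h powr (real CARD('n) + 2 * s)"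
    and "kernel_S s \<Phi> (x, x - h) = (\<Phi> (x, x - h) - \<Phi> (x, x)) / norm h powr (real CARD('n) + 2 * s)"
    and "(x, x + h) \<in> Bc \<epsilon> \<longleftrightarrow> \<epsilon> \<le> norm h"
    and "(x, x - h) \<in> Bc \<epsilon> \<longleftrightarrow> \<epsilon> \<le> norm h"
  by (simp_all add: kernel_S_def Bc_def dist_norm)

lemma set_integrable_kernel_S:
  fixes \<Phi> :: "(real^'n) \<times> (real^'n) \<Rightarrow> real"
  assumes s: "0 < s" and \<Phi>: "test_fun \<Phi>" and \<epsilon>: "0 < \<epsilon>"
  shows "set_integrable lborel (Bc \<epsilon>) (kernel_S s \<Phi>)"
proof -
  define a where "a = real CARD('n) + 2 * s"
  define N where "N = Cm_seminorm 0 \<Phi>"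
  define P where "P = fst ` tsupport \<Phi>"
  define F where "F z = indicator (Bc \<epsilon>) z *\<^sub>R kernel_S s \<Phi> z" for z
  have F: "F \<in> borel_measurable lborel"
    unfolding F_def[abs_def] using Bc_sets kernel_S_measurable[OF \<Phi>] by measurable
  have "integrable lborel (\<lambda>z. F (fst z, fst z + 1 *\<^sub>R snd z))"
  proof (rule Bochner_Integration.integrable_bound)
    have "compact P"
      using \<Phi> unfolding P_def test_fun_def by (intro compact_continuous_image continuous_intros) auto
    moreover have "set_integrable lborel {h::real^'n. \<epsilon> \<le> norm h} (\<lambda>h. 1 / norm h powr a)"
      using s \<epsilon> by (intro set_integrable_inverse_norm_powr_outside_ball) (auto simp: a_def)
    then have "integrable lborel (\<lambda>h::real^'n. 2 * N * (indicator {h. \<epsilon> \<le> norm h} h / norm h powr a))"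
      unfolding set_integrable_def by (intro integrable_mult_right) simp
    ultimately show "integrable lborel (\<lambda>z::(real^'n) \<times> (real^'n).
        indicator P (fst z) * (2 * N * (indicator {h. \<epsilon> \<le> norm h} (snd z) / norm (snd z) powr a)))"
      by (rule integrable_indicator_fst_mult)
    show "(\<lambda>z. F (fst z, fst z + 1 *\<^sub>R snd z)) \<in> borel_measurable lborel"
      using measurable_comp[OF measurable_shear[of 1] F] by (simp add: comp_def)
    show "AE z in lborel. norm (F (fst z, fst z + 1 *\<^sub>R snd z))
        \<le> norm (indicator P (fst z) * (2 * N * (indicator {h. \<epsilon> \<le> norm h} (snd z) / norm (snd z) powr a)))"
    proof (rule AE_I2)
      fix z :: "(real^'n) \<times> (real^'n)"
      obtain x h where z: "z = (x, h)" by fastforce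
      have "\<bar>\<Phi> (x, x + h) - \<Phi> (x, x)\<bar> \<le> 2 * (indicator P x * N)"
        using abs_triangle_ineq4[of "\<Phi> (x, x + h)" "\<Phi> (x, x)"]
          abs_test_fun_le_indicator_fst[OF \<Phi> order_refl, of x "x + h" 0]
          abs_test_fun_le_indicator_fst[OF \<Phi> order_refl, of x x 0]
        unfolding P_def N_def by linarith
      then have "\<bar>\<Phi> (x, x + h) - \<Phi> (x, x)\<bar> / norm h powr a \<le> 2 * (indicator P x * N) / norm h powr a"
        by (intro divide_right_mono) auto
      moreover have "0 \<le> N" using Cm_seminorm_nonneg[OF \<Phi>] by (simp add: N_def)
      ultimately show "norm (F (fst z, fst z + 1 *\<^sub>R snd z))
          \<le> norm (indicator P (fst z) * (2 * N * (indicator {h. \<epsilon> \<le> norm h} (snd z) / norm (snd z) powr a)))"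
        by (simp add: z F_def a_def indicator_def abs_mult mult_ac kernel_S_translate)
    qed
  qed
  then have "integrable lborel F" using integrable_shear_iff[of 1 F] F by simp
  then show ?thesis unfolding set_integrable_def F_def[abs_def] .
qed

lemma trunc_S_eq_integral_sym_kernel_S:
  fixes \<Phi> :: "(real^'n) \<times> (real^'n) \<Rightarrow> real"
  assumes s: "0 < s" and \<Phi>: "test_fun \<Phi>" and \<epsilon>: "0 < \<epsilon>"
  shows "trunc_S s \<Phi> \<epsilon> = (\<integral>z. indicator {h. \<epsilon> \<le> norm h} (snd z) * sym_kernel_S s \<Phi> z \<partial>lborel)"
proof -
  define F where "F z = indicator (Bc \<epsilon>) z *\<^sub>R kernel_S s \<Phi> z" for z
  define G where "G c z = F (fst z, fst z + c *\<^sub>R snd z)" for c :: real and z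
  have F: "F \<in> borel_measurable lborel"
    unfolding F_def[abs_def] using Bc_sets kernel_S_measurable[OF \<Phi>] by measurable
  have "integrable lborel F"
    using set_integrable_kernel_S[OF s \<Phi> \<epsilon>] by (simp add: set_integrable_def F_def[abs_def])
  then have G: "integrable lborel (G c)" "integral\<^sup>L lborel (G c) = integral\<^sup>L lborel F"
    if "\<bar>c\<bar> = 1" for c
    using integrable_shear_iff[OF that F] integral_shear[OF that F] by (simp_all add: G_def[abs_def])
  have "trunc_S s \<Phi> \<epsilon> = (integral\<^sup>L lborel (G 1) + integral\<^sup>L lborel (G (-1))) / 2"
    using G(2)[of 1] G(2)[of "-1"] by (simp add: trunc_S_def set_lebesgue_integral_def F_def[abs_def])
  also have "\<dots> = (\<integral>z. (G 1 z + G (-1) z) / 2 \<partial>lborel)"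
    using G(1)[of 1] G(1)[of "-1"] by simp
  also have "\<dots> = (\<integral>z. indicator {h. \<epsilon> \<le> norm h} (snd z) * sym_kernel_S s \<Phi> z \<partial>lborel)"
    by (intro Bochner_Integration.integral_cong)
      (auto simp: G_def F_def kernel_S_translate sym_kernel_S_def indicator_def
        add_divide_distrib[symmetric] divide_divide_eq_left algebra_simps)
  finally show ?thesis .
qed

lemma trunc_S_tendsto_integral_sym_kernel_S:
  fixes \<Phi> :: "(real^'n) \<times> (real^'n) \<Rightarrow> real"
  assumes s: "0 < s" "s < 1" and \<Phi>: "test_fun \<Phi>"
  shows "(trunc_S s \<Phi> \<longlongrightarrow> integral\<^sup>L lborel (sym_kernel_S s \<Phi>)) (at_right 0)"
proof -
  define w where "w z = Cm_seminorm 2 \<Phi> * sym_kernel_majorant s (fst ` tsupport \<Phi>) z" for z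
  define T where "T t z = indicator {h. inverse t \<le> norm h} (snd z) * sym_kernel_S s \<Phi> z"
    for t :: real and z :: "(real^'n) \<times> (real^'n)"
  have [measurable]: "sym_kernel_S s \<Phi> \<in> borel_measurable (lborel \<Otimes>\<^sub>M lborel)"
    using sym_kernel_S_measurable[OF \<Phi>] by (simp add: lborel_prod)
  have "((\<lambda>t. integral\<^sup>L lborel (T t)) \<longlongrightarrow> integral\<^sup>L lborel (sym_kernel_S s \<Phi>)) at_top"
  proof (rule integral_dominated_convergence_at_top[where w=w])
    show "integrable lborel w"
      using s \<Phi> unfolding w_def test_fun_def
      by (intro integrable_mult_right integrable_sym_kernel_majorant) auto
    have "T t \<in> borel_measurable (lborel \<Otimes>\<^sub>M lborel)" for t unfolding T_def by measurable
    then show "T t \<in> borel_measurable lborel" for t by (simp add: lborel_prod)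
    have bound: "\<bar>sym_kernel_S s \<Phi> z\<bar> \<le> w z" for z
      unfolding w_def by (rule abs_sym_kernel_S_le[OF \<Phi> order_refl])
    show "\<forall>\<^sub>F t in at_top. AE z in lborel. norm (T t z) \<le> w z"
      using bound order_trans[OF abs_ge_zero bound]
      by (intro always_eventually allI AE_I2) (simp add: T_def indicator_def)
    show "AE z in lborel. ((\<lambda>t. T t z) \<longlongrightarrow> sym_kernel_S s \<Phi> z) at_top"
    proof (rule AE_I2)
      fix z :: "(real^'n) \<times> (real^'n)"
      show "((\<lambda>t. T t z) \<longlongrightarrow> sym_kernel_S s \<Phi> z) at_top"
      proof (cases "snd z = 0")
        case True
        \<comment> \<open>the kernel vanishes on the diagonal because \<open>x / 0 = 0\<close>\<close>
        then show ?thesis by (simp add: T_def sym_kernel_S_def)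
      next
        case False
        have "\<forall>\<^sub>F t in at_top. T t z = sym_kernel_S s \<Phi> z"
          using eventually_ge_at_top[of "inverse (norm (snd z))"]
        proof eventually_elim
          case (elim t)
          then have "inverse t \<le> norm (snd z)"
            using le_imp_inverse_le[OF elim] False by simp
          then show ?case by (simp add: T_def)
        qed
        then show ?thesis by (rule tendsto_eventually)
      qed
    qed
  qed (rule sym_kernel_S_measurable[OF \<Phi>])
  moreover have "\<forall>\<^sub>F t in at_top. trunc_S s \<Phi> (inverse t) = integral\<^sup>L lborel (T t)"
    using eventually_gt_at_top[of 0]
    by eventually_elim (simp add: T_def[abs_def] trunc_S_eq_integral_sym_kernel_S[OF s(1) \<Phi>])
  ultimately have
    "((\<lambda>t. trunc_S s \<Phi> (inverse t)) \<longlongrightarrow> integral\<^sup>L lborel (sym_kernel_S s \<Phi>)) at_top"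
    by (simp add: tendsto_cong)
  then show ?thesis by (simp add: filterlim_at_right_to_top)
qed

lemma S_op_eqI:
  assumes "(trunc_S s \<Phi> \<longlongrightarrow> L) (at_right 0)"
  shows "S_op s \<Phi> = L"
  unfolding S_op_def using assms by (intro tendsto_Lim) simp_all

lemma S_op_eq_integral_sym_kernel_S:
  fixes \<Phi> :: "(real^'n) \<times> (real^'n) \<Rightarrow> real"
  assumes s: "0 < s" "s < 1" and \<Phi>: "test_fun \<Phi>"
  shows "S_op s \<Phi> = integral\<^sup>L lborel (sym_kernel_S s \<Phi>)"
  by (rule S_op_eqI[OF trunc_S_tendsto_integral_sym_kernel_S[OF s \<Phi>]])

lemma trunc_S_tendsto_S_op:
  fixes \<Phi> :: "(real^'n) \<times> (real^'n) \<Rightarrow> real"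
  assumes s: "0 < s" "s < 1" and \<Phi>: "test_fun \<Phi>"
  shows "(trunc_S s \<Phi> \<longlongrightarrow> S_op s \<Phi>) (at_right 0)"
  using trunc_S_tendsto_integral_sym_kernel_S[OF s \<Phi>] S_op_eq_integral_sym_kernel_S[OF s \<Phi>]
  by simp

lemma S_op_add:
  fixes f g :: "(real^'n) \<times> (real^'n) \<Rightarrow> real"
  assumes s: "0 < s" "s < 1" and f: "test_fun f" and g: "test_fun g"
  shows "S_op s (\<lambda>z. f z + g z) = S_op s f + S_op s g"
proof (rule S_op_eqI)
  have kernel: "kernel_S s (\<lambda>z. f z + g z) z = kernel_S s f z + kernel_S s g z" for z
    by (simp add: kernel_S_def add_divide_distrib[symmetric] algebra_simps)
  have "\<forall>\<^sub>F \<epsilon> in at_right 0. trunc_S s (\<lambda>z. f z + g z) \<epsilon> = trunc_S s f \<epsilon> + trunc_S s g \<epsilon>"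
    using eventually_at_right_less[of 0]
    by eventually_elim (simp add: trunc_S_def kernel set_integral_add(2)[OF
        set_integrable_kernel_S[OF s(1) f] set_integrable_kernel_S[OF s(1) g]])
  then show "(trunc_S s (\<lambda>z. f z + g z) \<longlongrightarrow> S_op s f + S_op s g) (at_right 0)"
    using tendsto_add[OF trunc_S_tendsto_S_op[OF s f] trunc_S_tendsto_S_op[OF s g]]
    by (simp add: tendsto_cong)
qed

lemma S_op_cmult:
  fixes f :: "(real^'n) \<times> (real^'n) \<Rightarrow> real"
  assumes s: "0 < s" "s < 1" and f: "test_fun f"
  shows "S_op s (\<lambda>z. c * f z) = c * S_op s f"
proof (rule S_op_eqI)
  have "kernel_S s (\<lambda>z. c * f z) z = c * kernel_S s f z" for z
    by (simp add: kernel_S_def right_diff_distrib)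
  then have "trunc_S s (\<lambda>z. c * f z) = (\<lambda>\<epsilon>. c * trunc_S s f \<epsilon>)"
    by (simp add: trunc_S_def fun_eq_iff set_integral_mult_right)
  then show "(trunc_S s (\<lambda>z. c * f z) \<longlongrightarrow> c * S_op s f) (at_right 0)"
    using tendsto_mult_left[OF trunc_S_tendsto_S_op[OF s f]] by simp
qed

lemma abs_S_op_le:
  fixes \<Phi> :: "(real^'n) \<times> (real^'n) \<Rightarrow> real"
  assumes s: "0 < s" "s < 1" and \<Phi>: "test_fun \<Phi>" and K: "compact K" "tsupport \<Phi> \<subseteq> K"
  shows "\<bar>S_op s \<Phi>\<bar> \<le> integral\<^sup>L lborel (sym_kernel_majorant s (fst ` K)) * Cm_seminorm 2 \<Phi>"
proof -
  have "integrable lborel (\<lambda>z. Cm_seminorm 2 \<Phi> * sym_kernel_majorant s (fst ` K) z)"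
    using s K(1) by (intro integrable_mult_right integrable_sym_kernel_majorant)
  moreover have "integrable lborel (\<lambda>z. \<bar>sym_kernel_S s \<Phi> z\<bar>)"
    using integrable_sym_kernel_S[OF s \<Phi>] by (rule integrable_abs)
  ultimately have "(\<integral>z. \<bar>sym_kernel_S s \<Phi> z\<bar> \<partial>lborel)
      \<le> (\<integral>z. Cm_seminorm 2 \<Phi> * sym_kernel_majorant s (fst ` K) z \<partial>lborel)"
    using abs_sym_kernel_S_le[OF \<Phi> K(2)] by (intro integral_mono)
  moreover have "\<bar>S_op s \<Phi>\<bar> \<le> (\<integral>z. \<bar>sym_kernel_S s \<Phi> z\<bar> \<partial>lborel)"
    using integral_norm_bound[of lborel "sym_kernel_S s \<Phi>"] S_op_eq_integral_sym_kernel_S[OF s \<Phi>]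
    by simp
  ultimately show ?thesis by (simp add: mult.commute)
qed

theorem lemma7p4:
  fixes s :: real
  assumes "1/2 \<le> s" and "s < 1"
  shows "(\<forall>\<Phi> :: (real^'n) \<times> (real^'n) \<Rightarrow> real. test_fun \<Phi> \<longrightarrow>
            (\<forall>\<epsilon>>0. set_integrable lborel (Bc \<epsilon>) (kernel_S s \<Phi>)) \<and>
            (trunc_S s \<Phi> \<longlongrightarrow> S_op s \<Phi>) (at_right 0))
         \<and> distribution (S_op s :: ((real^'n) \<times> (real^'n) \<Rightarrow> real) \<Rightarrow> real)"
proof -
  have s: "0 < s" "s < 1" using assms by auto
  have "distribution (S_op s :: ((real^'n) \<times> (real^'n) \<Rightarrow> real) \<Rightarrow> real)"
    unfolding distribution_def
  proof (intro conjI allI impI)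
    fix K :: "((real^'n) \<times> (real^'n)) set" assume "compact K"
    then show "\<exists>C m. \<forall>f. test_fun f \<and> tsupport f \<subseteq> K \<longrightarrow> \<bar>S_op s f\<bar> \<le> C * Cm_seminorm m f"
      using abs_S_op_le[OF s] by blast
  qed (simp_all add: S_op_add[OF s] S_op_cmult[OF s])
  then show ?thesis using set_integrable_kernel_S[OF s(1)] trunc_S_tendsto_S_op[OF s] by blast
qed

end
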